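(* Let $r$ be a positive integer and $n\ge0$. Then $$E_n^{(r)}(x)=\frac{2^{r-1}}{(r-1)!}\sum_{\substack{0\le j\le r-1\\ 0\le k\le n/2}}(-1)^j\,s(r,r-j)\binom{n}{2k}r^{n-2k}\,E_{2k+r-j-1}\,E_{n-2k}\!\left(\frac{x}{r}\right).$$
   Context: For a positive integer $r$, the Euler polynomials of order $r$ are defined by $\sum_{n\ge0}E_n^{(r)}(x)\frac{t^n}{n!}=\left(\frac{2}{e^t+1}\right)^re^{xt}$. $E_n(x)=E_n^{(1)}(x)$ are the Euler polynomials and $E_m:=E_m(0)$. $s(n,l)$ denotes the (signed) Stirling numbers of the first kind, $x(x-1)\cdots(x-n+1)=\sum_l s(n,l)x^l$. *)

theory Defs
  imports "HOL-Computational_Algebra.Computational_Algebra"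
begin

definition euler_gf :: "nat \<Rightarrow> real \<Rightarrow> real fps" where
  "euler_gf r x = (fps_const 2 * inverse (fps_exp 1 + 1)) ^ r * fps_exp x"

definition euler_poly_ord :: "nat \<Rightarrow> nat \<Rightarrow> real \<Rightarrow> real" where
  "euler_poly_ord r n x = fact n * fps_nth (euler_gf r x) n"

definition euler_poly :: "nat \<Rightarrow> real \<Rightarrow> real" where
  "euler_poly n x = euler_poly_ord 1 n x"

definition euler_num :: "nat \<Rightarrow> real" where
  "euler_num m = euler_poly m 0"

definition stirling1s :: "nat \<Rightarrow> nat \<Rightarrow> int" where
  "stirling1s n l = coeff (\<Prod>i<n. [:- of_nat i, 1:]) l"

end

theory Submission
  imports Defs "HOL-Combinatorics.Stirling"
begin

text \<open>
  Write H = 2/(e^t + 1) and I = 1/(e^t + 1). From (D + k) I^k = k I^(k+1) one gets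
  (D + 1)...(D + m) H = 2 m! I^(m+1), and expanding this operator in powers of D produces the
  unsigned Stirling numbers |s(m+1, l+1)|. Since I(-t) = e^t I(t), the even part of I^(m+1) is
  I^(m+1) (e^((m+1)t) + 1)/2, and the factor e^((m+1)t) + 1 cancels against
  H((m+1)t) e^(xt) = 2 e^(xt)/(e^((m+1)t) + 1). So H^(m+1) e^(xt) is 2^m/m! times the product of
  the even part of (D + 1)...(D + m) H with H((m+1)t) e^(xt), and comparing coefficients of t^n
  gives the formula.
\<close>

lemma stirling1s_eq_signed_stirling:
  "stirling1s n l = (-1) ^ (n + l) * int (stirling n l)"
proof (induction n arbitrary: l)
  case 0
  then show ?case by (cases l) (simp_all add: stirling1s_def)
next
  case (Suc n)
  have prod_Suc: "(\<Prod>i<Suc n. [:- of_nat i, 1:]) =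
      [:- of_nat n, 1:] * (\<Prod>i<n. [:- of_nat i, 1:] :: int poly)"
    by (simp add: mult.commute)
  show ?case
  proof (cases l)
    case 0
    then show ?thesis using Suc.IH[of 0] by (cases n) (simp_all add: stirling1s_def prod_Suc)
  next
    case (Suc k)
    then show ?thesis using Suc.IH[of k] Suc.IH[of "Suc k"]
      by (simp add: stirling1s_def prod_Suc algebra_simps)
  qed
qed

lemma sign_mult_stirling1s_diff:
  assumes "j \<le> n"
  shows "(-1) ^ j * stirling1s n (n - j) = int (stirling n (n - j))"
proof -
  have "j + (n + (n - j)) = 2 * n"
    using assms by simp
  then have "(-1 :: int) ^ j * (-1) ^ (n + (n - j)) = 1"
    by (simp flip: power_add add: power_mult)
  then show ?thesis
    by (simp add: stirling1s_eq_signed_stirling mult.assoc[symmetric])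
qed

lemma fps_nth_higher_deriv:
  "(fps_deriv ^^ c) f $ i = fact (i + c) / fact i * (f :: 'a::field_char_0 fps) $ (i + c)"
proof (induction c arbitrary: i)
  case (Suc c)
  have "(fps_deriv ^^ Suc c) f $ i = of_nat (i + 1) * ((fps_deriv ^^ c) f $ (i + 1))"
    by simp
  also have "\<dots> = fact (i + Suc c) / fact i * f $ (i + Suc c)"
    by (simp add: Suc field_simps del: of_nat_Suc)
  finally show ?case .
qed simp

definition fps_even_part :: "'a::zero fps \<Rightarrow> 'a fps" where
  "fps_even_part f = Abs_fps (\<lambda>n. if even n then f $ n else 0)"

lemma fps_even_part_eq_reflect:
  "fps_even_part f = fps_const (1 / 2) * (f + (f oo fps_const (-1) * fps_X))"
  for f :: "'a::field_char_0 fps"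
  by (rule fps_ext) (auto simp: fps_even_part_def minus_one_power_iff)

lemma fps_even_part_sum_const_mult:
  "fps_even_part (\<Sum>l\<in>S. fps_const (c l) * f l) =
     (\<Sum>l\<in>S. fps_const (c l) * fps_even_part (f l))"
  for f :: "'b \<Rightarrow> 'a::comm_ring_1 fps"
  by (rule fps_ext) (auto simp: fps_even_part_def fps_sum_nth)

lemma fps_even_part_mult_nth:
  "(fps_even_part f * g) $ n = (\<Sum>k\<le>n div 2. f $ (2 * k) * g $ (n - 2 * k))"
  for f g :: "'a::comm_semiring_1 fps"
proof -
  have "(fps_even_part f * g) $ n = (\<Sum>i=0..n. if even i then f $ i * g $ (n - i) else 0)"
    by (auto simp: fps_mult_nth fps_even_part_def intro!: sum.cong)
  also have "\<dots> = (\<Sum>i\<in>{i\<in>{0..n}. even i}. f $ i * g $ (n - i))"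
    by (rule sum.inter_filter[symmetric]) simp
  also have "{i\<in>{0..n}. even i} = (*) 2 ` {..n div 2}"
    by (auto simp: image_iff elim!: evenE)
  also have "(\<Sum>i\<in>(*) 2 ` {..n div 2}. f $ i * g $ (n - i)) =
      (\<Sum>k\<le>n div 2. f $ (2 * k) * g $ (n - 2 * k))"
    by (subst sum.reindex) (auto simp: inj_on_def)
  finally show ?thesis .
qed

primrec fps_deriv_pochhammer :: "nat \<Rightarrow> 'a::comm_ring_1 fps \<Rightarrow> 'a fps" where
  "fps_deriv_pochhammer 0 f = f"
| "fps_deriv_pochhammer (Suc m) f =
     fps_deriv (fps_deriv_pochhammer m f) + fps_const (of_nat (Suc m)) * fps_deriv_pochhammer m f"

lemma fps_deriv_pochhammer_eq_sum:
  "fps_deriv_pochhammer m f =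
     (\<Sum>l\<le>m. fps_const (of_nat (stirling (Suc m) (Suc l))) * (fps_deriv ^^ l) f)"
proof (induction m)
  case (Suc m)
  let ?s = "\<lambda>l. fps_const (of_nat (stirling (Suc m) l))"
  have "(\<Sum>l\<le>Suc m. fps_const (of_nat (stirling (Suc (Suc m)) (Suc l))) * (fps_deriv ^^ l) f)
      = fps_const (of_nat (Suc m)) * (\<Sum>l\<le>Suc m. ?s (Suc l) * (fps_deriv ^^ l) f)
        + (\<Sum>l\<le>Suc m. ?s l * (fps_deriv ^^ l) f)"
    by (simp only: stirling.simps(4)[of "Suc m"] of_nat_add of_nat_mult fps_const_add[symmetric]
        fps_const_mult[symmetric] distrib_right sum.distrib sum_distrib_left mult.assoc)
  also have "(\<Sum>l\<le>Suc m. ?s (Suc l) * (fps_deriv ^^ l) f) = fps_deriv_pochhammer m f"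
    by (simp add: Suc)
  also have "(\<Sum>l\<le>Suc m. ?s l * (fps_deriv ^^ l) f) =
      (\<Sum>l\<le>m. ?s (Suc l) * (fps_deriv ^^ Suc l) f)"
    by (subst sum.atMost_Suc_shift) simp
  also have "\<dots> = fps_deriv (fps_deriv_pochhammer m f)"
    by (simp add: Suc fps_deriv_sum del: stirling.simps)
  finally show ?case by (simp add: add.commute)
qed simp

lemma fps_inverse_exp_plus_one_power_deriv:
  fixes k :: nat
  defines "I \<equiv> inverse (fps_exp 1 + 1 :: 'a::field_char_0 fps)"
  shows "fps_deriv (I ^ k) + fps_const (of_nat k) * I ^ k = fps_const (of_nat k) * I ^ Suc k"
proof (cases k)
  case (Suc j)
  have W0: "(fps_exp 1 + 1 :: 'a fps) $ 0 \<noteq> 0" by simp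
  have deriv: "fps_deriv (I ^ k) = - fps_const (of_nat k) * fps_exp 1 * I ^ Suc k"
    using fps_inverse_deriv[OF W0]
    by (simp only: fps_deriv_power I_def Suc diff_Suc_1)
      (simp add: power2_eq_square algebra_simps del: fps_const_neg)
  have shift: "I ^ k = (fps_exp 1 + 1) * I ^ Suc k"
    using inverse_mult_eq_1'[OF W0] by (simp only: power_Suc mult.assoc[symmetric] I_def) simp
  show ?thesis
    unfolding deriv by (subst shift) (simp add: algebra_simps del: fps_const_neg)
qed simp

lemma fps_deriv_pochhammer_inverse_exp_plus_one:
  "fps_deriv_pochhammer m (fps_const c * inverse (fps_exp 1 + 1)) =
     fps_const (c * fact m) * inverse (fps_exp 1 + 1 :: 'a::field_char_0 fps) ^ Suc m"
proof (induction m)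
  case (Suc m)
  let ?I = "inverse (fps_exp 1 + 1 :: 'a fps)"
  have "fps_deriv_pochhammer (Suc m) (fps_const c * ?I) = fps_const (c * fact m) *
      (fps_deriv (?I ^ Suc m) + fps_const (of_nat (Suc m)) * ?I ^ Suc m)"
    by (simp only: fps_deriv_pochhammer.simps Suc fps_deriv_mult_const_left distrib_left
        mult.left_commute)
  also have "\<dots> = fps_const (c * fact (Suc m)) * ?I ^ Suc (Suc m)"
    by (simp only: fps_inverse_exp_plus_one_power_deriv mult.assoc[symmetric]
        fps_const_mult[symmetric])
      (simp add: algebra_simps)
  finally show ?case .
qed simp

lemma inverse_exp_plus_one_reflect:
  "inverse (fps_exp 1 + 1) oo (fps_const (-1) * fps_X) =
     fps_exp 1 * inverse (fps_exp 1 + 1 :: 'a::field_char_0 fps)"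
proof -
  define I where "I = inverse (fps_exp 1 + 1 :: 'a fps)"
  have W0: "(fps_exp 1 + 1 :: 'a fps) $ 0 \<noteq> 0" by simp
  have exp_inverse: "fps_exp (-1) * fps_exp 1 = (1 :: 'a fps)"
    by (simp flip: fps_exp_add_mult)
  have "(fps_exp (-1) + 1) * (fps_exp 1 * I) = (fps_exp (-1) * fps_exp 1) * I + fps_exp 1 * I"
    by (simp only: distrib_right mult.assoc mult_1)
  also have "\<dots> = (fps_exp 1 + 1) * I"
    by (simp add: exp_inverse distrib_right add.commute)
  also have "\<dots> = 1"
    using inverse_mult_eq_1'[OF W0] by (simp add: I_def)
  finally show ?thesis
    by (simp add: fps_inverse_compose fps_compose_add_distrib fps_inverse_unique I_def)
qed

definition euler_fps :: "'a::field_char_0 fps" where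
  "euler_fps = fps_const 2 * inverse (fps_exp 1 + 1)"

lemma euler_fps_power_mult_exp:
  fixes x :: "'a::field_char_0"
  shows "euler_fps ^ Suc m * fps_exp x =
    fps_const (2 ^ m / fact m) * fps_even_part (fps_deriv_pochhammer m euler_fps) *
      ((euler_fps * fps_exp (x / of_nat (Suc m))) oo (fps_const (of_nat (Suc m)) * fps_X))"
proof -
  define I where "I = inverse (fps_exp 1 + 1 :: 'a fps)"
  define U where "U = fps_exp (of_nat (Suc m)) + (1 :: 'a fps)"
  have U0: "U $ 0 \<noteq> 0" by (simp add: U_def)
  have pochhammer: "fps_deriv_pochhammer m euler_fps = fps_const (2 * fact m) * I ^ Suc m"
    by (simp add: euler_fps_def I_def fps_deriv_pochhammer_inverse_exp_plus_one)
  have "fps_even_part (fps_deriv_pochhammer m euler_fps) =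
      fps_const (1 / 2) *
        (fps_const (2 * fact m) * I ^ Suc m + fps_const (2 * fact m) * (fps_exp 1 * I) ^ Suc m)"
    by (simp add: fps_even_part_eq_reflect pochhammer fps_compose_mult_distrib
        fps_compose_power[symmetric] inverse_exp_plus_one_reflect I_def del: power_Suc)
  also have "\<dots> = fps_const (fact m) * (I ^ Suc m + (fps_exp 1 * I) ^ Suc m)"
    by (simp only: distrib_left mult.assoc[symmetric] fps_const_mult) (simp add: distrib_left)
  also have "\<dots> = fps_const (fact m) * I ^ Suc m * U"
    by (simp add: U_def fps_exp_power_mult algebra_simps del: power_Suc)
  finally have even_part:
    "fps_even_part (fps_deriv_pochhammer m euler_fps) = fps_const (fact m) * I ^ Suc m * U" .
  have scaled: "(euler_fps * fps_exp (x / of_nat (Suc m))) oo (fps_const (of_nat (Suc m)) * fps_X)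
      = fps_const 2 * inverse U * fps_exp x"
  proof -
    have "inverse (fps_exp 1 + 1) oo fps_const (of_nat (Suc m)) * fps_X = inverse U"
      by (subst fps_inverse_compose) (simp_all add: U_def fps_compose_add_distrib)
    then show ?thesis
      by (simp add: euler_fps_def fps_compose_mult_distrib del: of_nat_Suc)
  qed
  have "fps_const (2 ^ m / fact m) * (fps_const (fact m) * I ^ Suc m * U) *
        (fps_const 2 * inverse U * fps_exp x)
      = (fps_const (2 ^ m / fact m) * fps_const (fact m) * fps_const 2) * I ^ Suc m * fps_exp x *
        (U * inverse U)"
    by (simp only: mult_ac)
  also have "\<dots> = fps_const (2 ^ Suc m) * I ^ Suc m * fps_exp x"
    using inverse_mult_eq_1'[OF U0] by (simp flip: fps_const_mult)
  also have "\<dots> = euler_fps ^ Suc m * fps_exp x"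
    by (simp only: euler_fps_def I_def power_mult_distrib fps_const_power)
  finally show ?thesis
    by (simp only: even_part scaled)
qed

lemma euler_gf_eq: "euler_gf r x = euler_fps ^ r * fps_exp x"
  by (simp add: euler_gf_def euler_fps_def)

lemma euler_poly_eq_fps_nth: "euler_poly n y = fact n * (euler_fps * fps_exp y) $ n"
  by (simp add: euler_poly_def euler_poly_ord_def euler_gf_eq)

lemma euler_num_eq_fps_nth: "euler_num n = fact n * euler_fps $ n"
  by (simp add: euler_num_def euler_poly_eq_fps_nth)

lemma fact_mult_even_part_higher_deriv_euler_fps_nth:
  fixes c y :: real
  shows "fact n * (fps_even_part ((fps_deriv ^^ l) euler_fps) *
      ((euler_fps * fps_exp y) oo fps_const c * fps_X)) $ n =
    (\<Sum>k\<le>n div 2. of_nat (n choose (2 * k)) * c ^ (n - 2 * k) * euler_num (2 * k + l) *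
      euler_poly (n - 2 * k) y)"
proof -
  have summand: "fact n * ((fps_deriv ^^ l) euler_fps $ (2 * k) *
        (c ^ (n - 2 * k) * (euler_fps * fps_exp y) $ (n - 2 * k))) =
      of_nat (n choose (2 * k)) * c ^ (n - 2 * k) * euler_num (2 * k + l) *
        euler_poly (n - 2 * k) y"
    if "k \<le> n div 2" for k
  proof -
    have "2 * k \<le> n"
      using that by presburger
    then have "fact (2 * k) * fact (n - 2 * k) * of_nat (n choose (2 * k)) = (fact n :: real)"
      by (metis binomial_fact_lemma of_nat_fact of_nat_mult)
    then show ?thesis
      by (simp add: fps_nth_higher_deriv euler_num_eq_fps_nth euler_poly_eq_fps_nth field_simps)
  qed
  show ?thesis
    unfolding fps_even_part_mult_nth fps_nth_compose_linear sum_distrib_left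
    by (intro sum.cong refl summand) simp
qed

lemma euler_poly_ord_Suc_eq:
  "euler_poly_ord (Suc m) n x = 2 ^ m / fact m *
    (\<Sum>l\<le>m. of_nat (stirling (Suc m) (Suc l)) *
      (\<Sum>k\<le>n div 2. of_nat (n choose (2 * k)) * of_nat (Suc m) ^ (n - 2 * k) *
        euler_num (2 * k + l) * euler_poly (n - 2 * k) (x / of_nat (Suc m))))"
proof -
  define G where
    "G = (euler_fps * fps_exp (x / of_nat (Suc m))) oo fps_const (of_nat (Suc m)) * fps_X"
  have "euler_poly_ord (Suc m) n x = fact n * (euler_fps ^ Suc m * fps_exp x) $ n"
    by (simp add: euler_poly_ord_def euler_gf_eq)
  also have "\<dots> = fact n * (fps_const (2 ^ m / fact m) *
      fps_even_part (fps_deriv_pochhammer m euler_fps) * G) $ n"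
    by (simp only: euler_fps_power_mult_exp G_def)
  also have "fps_even_part (fps_deriv_pochhammer m euler_fps) =
      (\<Sum>l\<le>m. fps_const (of_nat (stirling (Suc m) (Suc l))) *
        fps_even_part ((fps_deriv ^^ l) euler_fps))"
    by (simp only: fps_deriv_pochhammer_eq_sum fps_even_part_sum_const_mult)
  also have "fact n * (fps_const (2 ^ m / fact m) * \<dots> * G) $ n = 2 ^ m / fact m *
      (\<Sum>l\<le>m. of_nat (stirling (Suc m) (Suc l)) *
        (fact n * (fps_even_part ((fps_deriv ^^ l) euler_fps) * G) $ n))"
    by (simp only: mult.assoc sum_distrib_right fps_mult_left_const_nth fps_sum_nth)
      (simp add: sum_distrib_left mult_ac del: stirling.simps)
  finally show ?thesis
    by (simp only: G_def fact_mult_even_part_higher_deriv_euler_fps_nth)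
qed

theorem mainTheorem8:
  fixes r n :: nat and x :: real
  assumes "r \<ge> 1"
  shows "euler_poly_ord r n x =
    2 ^ (r - 1) / fact (r - 1) *
    (\<Sum>j\<le>r - 1. \<Sum>k\<le>n div 2.
       (-1) ^ j * of_int (stirling1s r (r - j)) * of_nat (n choose (2 * k)) *
       of_nat r ^ (n - 2 * k) * euler_num (2 * k + r - j - 1) *
       euler_poly (n - 2 * k) (x / of_nat r))"
proof -
  obtain m where r: "r = Suc m"
    using assms by (cases r) auto
  define T where "T l = (\<Sum>k\<le>n div 2. of_nat (n choose (2 * k)) * of_nat r ^ (n - 2 * k) *
    euler_num (2 * k + l) * euler_poly (n - 2 * k) (x / of_nat r))" for l
  have "(\<Sum>k\<le>n div 2. (-1) ^ j * of_int (stirling1s r (r - j)) * of_nat (n choose (2 * k)) *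
       of_nat r ^ (n - 2 * k) * euler_num (2 * k + r - j - 1) *
       euler_poly (n - 2 * k) (x / of_nat r))
      = of_nat (stirling r (Suc (m - j))) * T (m - j)" if "j \<le> m" for j
  proof -
    have "r - j = Suc (m - j)"
      using that r by simp
    then have "(-1) ^ j * real_of_int (stirling1s r (r - j)) =
        of_nat (stirling r (Suc (m - j)))"
      using arg_cong[OF sign_mult_stirling1s_diff[of j r], of real_of_int] that r by simp
    moreover have "2 * k + r - j - 1 = 2 * k + (m - j)" for k
      using that r by simp
    ultimately show ?thesis
      by (simp add: T_def sum_distrib_left mult.assoc)
  qed
  then have "(\<Sum>j\<le>r - 1. \<Sum>k\<le>n div 2. (-1) ^ j * of_int (stirling1s r (r - j)) *
       of_nat (n choose (2 * k)) * of_nat r ^ (n - 2 * k) * euler_num (2 * k + r - j - 1) *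
       euler_poly (n - 2 * k) (x / of_nat r))
      = (\<Sum>j\<le>m. of_nat (stirling r (Suc (m - j))) * T (m - j))"
    by (simp add: r)
  also have "\<dots> = (\<Sum>l\<le>m. of_nat (stirling r (Suc l)) * T l)"
    by (rule sum.reindex_bij_witness[where i = "\<lambda>l. m - l" and j = "\<lambda>l. m - l"]) auto
  finally show ?thesis
    by (simp add: euler_poly_ord_Suc_eq T_def r del: of_nat_Suc)
qed

end
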